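(* Fix an integer $n\geq3$ and run the $n$-GHZ state generation protocol (described in the context). Suppose the protocol heralds success. If all input photons have the ideal internal state $|\psi_0\rangle$, then the output state on modes $0,\dots,2n-1$ is $|B_+\rangle=\frac1{\sqrt2}\left(|1,0\rangle^{\otimes n}+|0,1\rangle^{\otimes n}\right)$ (with all photons in internal state $|\psi_0\rangle$), where the $j$-th factor refers to modes $(2j,2j+1)$.
   Context: Photonic model: photons occupy spatial modes and carry internal states; linear optics acts on spatial modes; photon-number-resolving (PNR) detection reveals only photon number per spatial mode. Hadamard beamsplitter $H$ on ordered pair $(p,q)$: $a_p^\dagger\mapsto(a_p^\dagger+a_q^\dagger)/\sqrt2$, $a_q^\dagger\mapsto(a_p^\dagger-a_q^\dagger)/\sqrt2$. The $n$-GHZ state analyzer on $2n$ modes labeled $0,\dots,2n-1$: apply $H$ to each ordered pair in $\{(1,2),(3,4),\dots,(2n-3,2n-2),(2n-1,0)\}$, PNR-measure all modes getting $(m_0,\dots,m_{2n-1})$, succeed iff $m_{2i+1}+m_{2i+2}=1$ for all $0\le i<n$ ($m_{2n}=m_0$); it reports the value $(-1)^{s_{\mathrm{odd}}}$ for $X_0\cdots X_{n-1}$, where $s_{\mathrm{odd}}$ is the number of photons detected in its odd-indexed modes. The $n$-GHZ generation protocol on $4n$ modes $0,\dots,4n-1$: (1) input $|1\rangle^{\otimes 2n}\otimes|0\rangle^{\otimes 2n}$; (2) apply $H$ on each pair $(2i,2i+1)$, $0\le i<n$; (3) apply $H$ on each pair $(i,2n+i)$, $0\le i<2n$; (4) apply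 the $n$-GHZ state analyzer to modes $2n,\dots,4n-1$ (mode $2n+j$ playing the role of analyzer mode $j$), proceeding iff it heralds success; (5) if the analyzer reports $X\cdots X=-1$, apply a phase $-1$ to mode $1$. The output consists of modes $0,\dots,2n-1$. *)

theory Defs
  imports Complex_Main
begin

text \<open>All photons carry the same internal state psi0, so the relevant state space is the
bosonic Fock space of the spatial modes 0,1,2,... A state is represented by the coefficients
of its creation-operator polynomial: psi N is the coefficient of the monomial
prod_k (a_k^dagger)^(N k) applied to the vacuum, where N :: nat => nat is an occupation
pattern. The Fock amplitude of |N> is psi N * sqrt(prod_k (N k)!).\<close>

type_synonym occ = "nat \<Rightarrow> nat"
type_synonym state = "occ \<Rightarrow> complex"

text \<open>Coefficient of x^k y^(a+b-k) in ((x+y)/sqrt 2)^a ((x-y)/sqrt 2)^b.\<close>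
definition bs_coeff :: "nat \<Rightarrow> nat \<Rightarrow> nat \<Rightarrow> complex" where
  "bs_coeff a b k =
     (\<Sum>i\<le>a. \<Sum>j\<le>b. if i + j = k
        then of_nat (a choose i) * of_nat (b choose j) * (-1) ^ (b - j) else 0)
     / complex_of_real (sqrt 2) ^ (a + b)"

text \<open>Hadamard beamsplitter on the ordered pair (p,q):
  a_p^dagger -> (a_p^dagger + a_q^dagger)/sqrt 2,  a_q^dagger -> (a_p^dagger - a_q^dagger)/sqrt 2,
  acting on the creation polynomial (monomial x^a y^b with x = a_p^dagger, y = a_q^dagger
  is mapped to the expansion of ((x+y)/sqrt 2)^a ((x-y)/sqrt 2)^b).\<close>
definition hadamard :: "nat \<Rightarrow> nat \<Rightarrow> state \<Rightarrow> state" where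
  "hadamard p q \<psi> N =
     (\<Sum>a\<le>N p + N q. \<psi> (N(p := a, q := N p + N q - a)) * bs_coeff a (N p + N q - a) (N p))"

definition hadamards :: "(nat \<times> nat) list \<Rightarrow> state \<Rightarrow> state" where
  "hadamards ps \<psi> = fold (\<lambda>(p, q) \<phi>. hadamard p q \<phi>) ps \<psi>"

definition phase_flip :: "nat \<Rightarrow> state \<Rightarrow> state" where
  "phase_flip r \<psi> N = (-1) ^ (N r) * \<psi> N"

definition amp :: "state \<Rightarrow> occ \<Rightarrow> complex" where
  "amp \<psi> N = \<psi> N * complex_of_real (sqrt (real (\<Prod>k\<in>{k. N k \<noteq> 0}. fact (N k))))"

definition ghz_input :: "nat \<Rightarrow> state" where
  "ghz_input n N = (if N = (\<lambda>k. if k < 2 * n then 1 else 0) then 1 else 0)"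

definition step2_pairs :: "nat \<Rightarrow> (nat \<times> nat) list" where
  "step2_pairs n = map (\<lambda>i. (2 * i, 2 * i + 1)) [0..<n]"

definition step3_pairs :: "nat \<Rightarrow> (nat \<times> nat) list" where
  "step3_pairs n = map (\<lambda>i. (i, 2 * n + i)) [0..<2 * n]"

text \<open>The n-GHZ analyzer pairs (1,2),(3,4),...,(2n-3,2n-2),(2n-1,0), shifted so that
analyzer mode j is mode 2n+j.\<close>
definition analyzer_pairs :: "nat \<Rightarrow> (nat \<times> nat) list" where
  "analyzer_pairs n = map (\<lambda>i. (2 * n + (2 * i + 1), 2 * n + ((2 * i + 2) mod (2 * n)))) [0..<n]"

definition pre_measurement :: "nat \<Rightarrow> state" where
  "pre_measurement n =
     hadamards (analyzer_pairs n) (hadamards (step3_pairs n) (hadamards (step2_pairs n) (ghz_input n)))"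

text \<open>Analyzer outcome m j = photon count in analyzer mode j (physical mode 2n+j), j < 2n.\<close>
definition analyzer_success :: "nat \<Rightarrow> (nat \<Rightarrow> nat) \<Rightarrow> bool" where
  "analyzer_success n m \<longleftrightarrow> (\<forall>i<n. m (2 * i + 1) + m ((2 * i + 2) mod (2 * n)) = 1)"

definition s_odd :: "nat \<Rightarrow> (nat \<Rightarrow> nat) \<Rightarrow> nat" where
  "s_odd n m = (\<Sum>i<n. m (2 * i + 1))"

definition join_occ :: "nat \<Rightarrow> occ \<Rightarrow> (nat \<Rightarrow> nat) \<Rightarrow> occ" where
  "join_occ n v m = (\<lambda>k. if k < 2 * n then v k else if k < 4 * n then m (k - 2 * n) else 0)"

text \<open>Unnormalized post-measurement state (Fock amplitudes) of output modes 0..2n-1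
after outcome m, including the conditional phase correction of step (5).\<close>
definition ghz_output :: "nat \<Rightarrow> (nat \<Rightarrow> nat) \<Rightarrow> occ \<Rightarrow> complex" where
  "ghz_output n m v =
     (if \<forall>k\<ge>2 * n. v k = 0 then
        amp (if odd (s_odd n m) then phase_flip 1 (pre_measurement n) else pre_measurement n)
            (join_occ n v m)
      else 0)"

definition B_plus :: "nat \<Rightarrow> occ \<Rightarrow> complex" where
  "B_plus n v =
     (if v = (\<lambda>k. if k < 2 * n \<and> even k then 1 else 0) then 1 / complex_of_real (sqrt 2) else 0)
   + (if v = (\<lambda>k. if k < 2 * n \<and> odd k then 1 else 0) then 1 / complex_of_real (sqrt 2) else 0)"

end

theory Submission
  imports Defs
begin

text \<open>
  Before the analyzer the 4n modes split into n independent blocks: block i consists of the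
  output modes 2i, 2i+1 and the ancilla modes 2n+2i, 2n+2i+1, and all beamsplitters of steps (2)
  and (3) act inside a block. Each block therefore ends up in the two-photon state
  ((a_0 + a_2)^2 - (a_1 + a_3)^2)/4 in its local creation operators.

  The j-th analyzer beamsplitter joins the last ancilla of block j to the first ancilla of block
  j+1 (mod n). If it sees exactly one photon, that photon came from one of its two input modes,
  so the heralded amplitude is a sum over the set T of those j whose photon came from
  block j. A block with both ancillas occupied contributes nothing, which forces T to be closed
  under the cyclic predecessor; hence only T = {} and T = {0..n-1} survive. They give
  |1,0>^n and |0,1>^n with equal weights up to the sign (-1)^s_odd, which the phase flip of
  step (5) removes.
\<close>

lemma sqrt2_times_sqrt2: "complex_of_real (sqrt 2) * complex_of_real (sqrt 2) = 2"
  by (simp flip: of_real_mult)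

lemma bs_coeff_vacuum_right: "bs_coeff a 0 k = of_nat (a choose k) / complex_of_real (sqrt 2) ^ a"
proof -
  have "(\<Sum>i\<le>a. \<Sum>j\<le>0. if i + j = k
          then of_nat (a choose i) * of_nat (0 choose j) * (- 1 :: complex) ^ (0 - j) else 0)
      = (\<Sum>i\<le>a. if i = k then of_nat (a choose i) else 0)"
    by (rule sum.cong) simp_all
  then show ?thesis by (simp add: bs_coeff_def)
qed

lemma bs_coeff_1_1: "bs_coeff 1 1 k = (if k = 0 then - 1 / 2 else if k = 2 then 1 / 2 else 0)"
  by (auto simp: bs_coeff_def atMost_Suc sqrt2_times_sqrt2 numeral_2_eq_2)

lemma bs_coeff_0_1: "k \<le> 1 \<Longrightarrow> bs_coeff 0 1 k = (- 1) ^ Suc k / complex_of_real (sqrt 2)"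
  by (auto simp: bs_coeff_def le_Suc_eq)

lemma bs_coeff_1_0: "k \<le> 1 \<Longrightarrow> bs_coeff 1 0 k = 1 / complex_of_real (sqrt 2)"
  by (auto simp: bs_coeff_vacuum_right le_Suc_eq)

lemma prod_bs_coeff_0_1:
  assumes "\<forall>j\<in>A. f j \<le> 1"
  shows "(\<Prod>j\<in>A. bs_coeff 0 1 (f j)) = (- 1) ^ (card A + sum f A) / complex_of_real (sqrt 2) ^ card A"
proof -
  have "(\<Prod>j\<in>A. bs_coeff 0 1 (f j)) = (\<Prod>j\<in>A. (- 1) ^ Suc (f j) / complex_of_real (sqrt 2))"
    using assms by (intro prod.cong) (simp_all add: bs_coeff_0_1 del: One_nat_def)
  also have "\<dots> = (- 1) ^ (\<Sum>j\<in>A. Suc (f j)) / complex_of_real (sqrt 2) ^ card A"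
    by (simp only: prod_dividef prod_constant power_sum)
  finally show ?thesis by (simp only: sum_Suc add.commute)
qed

lemma prod_bs_coeff_1_0:
  assumes "\<forall>j\<in>A. f j \<le> 1"
  shows "(\<Prod>j\<in>A. bs_coeff 1 0 (f j)) = 1 / complex_of_real (sqrt 2) ^ card A"
  using assms by (simp add: bs_coeff_1_0 power_one_over del: One_nat_def)

lemma sum_Pow_lessThan_Suc:
  "(\<Sum>T\<in>Pow {..<Suc k}. f T) = (\<Sum>T\<in>Pow {..<k}. f T + f (insert k T))"
proof -
  have "inj_on (insert k) (Pow {..<k})"
    by (rule inj_onI) (metis Diff_insert_absorb PowD lessThan_iff order_less_irrefl subset_eq)
  then have "(\<Sum>T\<in>insert k ` Pow {..<k}. f T) = (\<Sum>T\<in>Pow {..<k}. f (insert k T))"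
    by (simp add: sum.reindex)
  moreover have "(\<Sum>T\<in>Pow {..<Suc k}. f T) = (\<Sum>T\<in>Pow {..<k}. f T) + (\<Sum>T\<in>insert k ` Pow {..<k}. f T)"
    unfolding lessThan_Suc Pow_insert by (rule sum.union_disjoint) auto
  ultimately show ?thesis by (simp add: sum.distrib)
qed

lemma prod_of_bool_times:
  fixes f :: "'a \<Rightarrow> 'b :: comm_semiring_1"
  shows "finite A \<Longrightarrow> (\<Prod>x\<in>A. of_bool (P x) * f x) = of_bool (\<forall>x\<in>A. P x) * prod f A"
  by (induction A rule: finite_induct) auto

section \<open>Beamsplitters on single-photon pairs\<close>

lemma hadamards_Nil [simp]: "hadamards [] \<psi> = \<psi>"
  by (simp add: hadamards_def)

lemma hadamards_append [simp]: "hadamards (xs @ ys) \<psi> = hadamards ys (hadamards xs \<psi>)"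
  by (simp add: hadamards_def)

lemma hadamards_Cons [simp]: "hadamards ((p, q) # xs) \<psi> = hadamards xs (hadamard p q \<psi>)"
  by (simp add: hadamards_def)

lemma hadamard_vacuum_input:
  assumes "\<And>M. M q \<noteq> 0 \<Longrightarrow> \<psi> M = 0"
  shows "hadamard p q \<psi> N = \<psi> (N(p := N p + N q, q := 0)) * bs_coeff (N p + N q) 0 (N p)"
proof -
  have "hadamard p q \<psi> N = (\<Sum>a\<le>N p + N q. if a = N p + N q
      then \<psi> (N(p := N p + N q, q := 0)) * bs_coeff (N p + N q) 0 (N p) else 0)"
    unfolding hadamard_def by (rule sum.cong) (auto simp: assms)
  then show ?thesis by simp
qed

lemma hadamard_single_photon:
  assumes "N p + N q = 1"
  shows "hadamard p q \<psi> N =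
    bs_coeff 0 1 (N p) * \<psi> (N(p := 0, q := 1)) + bs_coeff 1 0 (N p) * \<psi> (N(p := 1, q := 0))"
  unfolding hadamard_def assms by (simp add: atMost_Suc mult.commute)

definition disjoint_pairs :: "(nat \<Rightarrow> nat) \<Rightarrow> (nat \<Rightarrow> nat) \<Rightarrow> nat \<Rightarrow> bool" where
  "disjoint_pairs p q k \<longleftrightarrow> (\<forall>i<k. \<forall>j<k. p i \<noteq> q j \<and> (i \<noteq> j \<longrightarrow> p i \<noteq> p j \<and> q i \<noteq> q j))"

lemma disjoint_pairs_SucD:
  assumes "disjoint_pairs p q (Suc k)"
  shows "disjoint_pairs p q k" "p k \<noteq> q k"
    "\<forall>j<k. p j \<noteq> p k \<and> p j \<noteq> q k \<and> q j \<noteq> p k \<and> q j \<noteq> q k"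
proof -
  have "\<forall>i\<le>k. \<forall>j\<le>k. p i \<noteq> q j \<and> (i \<noteq> j \<longrightarrow> p i \<noteq> p j \<and> q i \<noteq> q j)"
    using assms unfolding disjoint_pairs_def less_Suc_eq_le .
  then show "disjoint_pairs p q k" "p k \<noteq> q k"
    "\<forall>j<k. p j \<noteq> p k \<and> p j \<noteq> q k \<and> q j \<noteq> p k \<and> q j \<noteq> q k"
    unfolding disjoint_pairs_def by (auto dest: less_imp_le) (metis le_refl nat_less_le)
qed

text \<open>The occupation just before the beamsplitters (p j, q j), j < k, when the single photon
  leaving beamsplitter j entered it through p j exactly for j \<in> T.\<close>

primrec fill_pairs :: "(nat \<Rightarrow> nat) \<Rightarrow> (nat \<Rightarrow> nat) \<Rightarrow> nat \<Rightarrow> nat set \<Rightarrow> occ \<Rightarrow> occ" where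
  "fill_pairs p q 0 T N = N"
| "fill_pairs p q (Suc k) T N = fill_pairs p q k T (N(p k := of_bool (k \<in> T), q k := of_bool (k \<notin> T)))"

lemma fill_pairs_outside: "(\<forall>j<k. p j \<noteq> x \<and> q j \<noteq> x) \<Longrightarrow> fill_pairs p q k T N x = N x"
  by (induction k arbitrary: N) auto

lemma fill_pairs_insert_beyond: "k \<le> l \<Longrightarrow> fill_pairs p q k (insert l T) N = fill_pairs p q k T N"
  by (induction k arbitrary: N) auto

lemma fill_pairs_at_pair:
  assumes "disjoint_pairs p q k" "j < k"
  shows "fill_pairs p q k T N (p j) = of_bool (j \<in> T) \<and> fill_pairs p q k T N (q j) = of_bool (j \<notin> T)"
  using assms
proof (induction k arbitrary: N)
  case 0
  then show ?case by simp
next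
  case (Suc k)
  note apart = disjoint_pairs_SucD[OF Suc.prems(1)]
  show ?case
  proof (cases "j < k")
    case True
    then show ?thesis using Suc.IH apart(1) by simp
  next
    case False
    then have "j = k" using Suc.prems(2) by simp
    with apart(2,3) show ?thesis by (simp add: fill_pairs_outside)
  qed
qed

lemma hadamards_single_photon_pairs:
  assumes "disjoint_pairs p q k" "\<forall>j<k. N (p j) + N (q j) = 1"
  shows "hadamards (map (\<lambda>j. (p j, q j)) [0..<k]) \<psi> N =
    (\<Sum>T\<in>Pow {..<k}. (\<Prod>j<k. bs_coeff (of_bool (j \<in> T)) (of_bool (j \<notin> T)) (N (p j)))
      * \<psi> (fill_pairs p q k T N))"
  using assms
proof (induction k arbitrary: N)
  case 0
  then show ?case by simp
next
  case (Suc k)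
  note apart = disjoint_pairs_SucD[OF Suc.prems(1)]
  let ?H = "hadamards (map (\<lambda>j. (p j, q j)) [0..<k]) \<psi>"
  let ?W = "\<lambda>T. \<Prod>j<k. bs_coeff (of_bool (j \<in> T)) (of_bool (j \<notin> T)) (N (p j))"
  have IH: "?H (N(p k := c, q k := d)) = (\<Sum>T\<in>Pow {..<k}. ?W T * \<psi> (fill_pairs p q k T (N(p k := c, q k := d))))"
    for c d
  proof -
    let ?N = "N(p k := c, q k := d)"
    have "\<forall>j<k. ?N (p j) + ?N (q j) = 1"
      using Suc.prems(2) apart(3) by simp
    moreover have "(\<Prod>j<k. bs_coeff (of_bool (j \<in> T)) (of_bool (j \<notin> T)) (?N (p j))) = ?W T" for T
      using apart(3) by (intro prod.cong) auto
    ultimately show ?thesis using Suc.IH[of ?N] apart(1) by presburger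
  qed
  have W_insert: "?W (insert k T) = ?W T" for T
    by (rule prod.cong) auto
  have "hadamards (map (\<lambda>j. (p j, q j)) [0..<Suc k]) \<psi> N = hadamard (p k) (q k) ?H N"
    by simp
  also have "\<dots> = bs_coeff 0 1 (N (p k)) * ?H (N(p k := 0, q k := 1))
      + bs_coeff 1 0 (N (p k)) * ?H (N(p k := 1, q k := 0))"
    using Suc.prems(2) by (simp add: hadamard_single_photon)
  also have "\<dots> = (\<Sum>T\<in>Pow {..<k}. bs_coeff 0 1 (N (p k)) * ?W T * \<psi> (fill_pairs p q k T (N(p k := 0, q k := 1)))
      + bs_coeff 1 0 (N (p k)) * ?W T * \<psi> (fill_pairs p q k T (N(p k := 1, q k := 0))))"
    by (simp add: IH sum_distrib_left sum.distrib mult.assoc)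
  also have "\<dots> = (\<Sum>T\<in>Pow {..<Suc k}. (\<Prod>j<Suc k. bs_coeff (of_bool (j \<in> T)) (of_bool (j \<notin> T)) (N (p j)))
      * \<psi> (fill_pairs p q (Suc k) T N))"
    unfolding sum_Pow_lessThan_Suc
    by (intro sum.cong refl) (auto simp: W_insert fill_pairs_insert_beyond mult_ac)
  finally show ?case .
qed

section \<open>Product states over blocks\<close>

definition block_mode :: "nat \<Rightarrow> nat \<Rightarrow> nat \<Rightarrow> nat" where
  "block_mode n i r = (if r < 2 then 2 * i + r else 2 * n + 2 * i + (r - 2))"

definition block_occ :: "nat \<Rightarrow> nat \<Rightarrow> occ \<Rightarrow> occ" where
  "block_occ n i N = (\<lambda>r. if r < 4 then N (block_mode n i r) else 0)"

definition product_state :: "nat \<Rightarrow> (nat \<Rightarrow> state) \<Rightarrow> state" where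
  "product_state n F N = (if \<forall>k\<ge>4 * n. N k = 0 then \<Prod>i<n. F i (block_occ n i N) else 0)"

lemma block_mode_less: "i < n \<Longrightarrow> r < 4 \<Longrightarrow> block_mode n i r < 4 * n"
  by (auto simp: block_mode_def)

lemma double_add_bit_inj: "(b::nat) < 2 \<Longrightarrow> c < 2 \<Longrightarrow> 2 * a + b = 2 * d + c \<Longrightarrow> a = d \<and> b = c"
  by presburger

lemma block_mode_inj:
  assumes "i < n" "j < n" "r < 4" "s < 4" and eq: "block_mode n i r = block_mode n j s"
  shows "i = j \<and> r = s"
proof -
  have "r < 2 \<longleftrightarrow> s < 2"
    using assms unfolding block_mode_def by (auto split: if_splits)
  then consider "r < 2" "s < 2" | "\<not> r < 2" "\<not> s < 2" by blast
  then show ?thesis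
  proof cases
    case 1
    then show ?thesis using eq double_add_bit_inj[of r s i j] by (simp add: block_mode_def)
  next
    case 2
    then have "2 * i + (r - 2) = 2 * j + (s - 2)" using eq by (simp add: block_mode_def)
    with 2 show ?thesis using assms(3,4) double_add_bit_inj[of "r - 2" "s - 2" i j] by linarith
  qed
qed

lemma block_mode_surj: "k < 4 * n \<Longrightarrow> \<exists>i<n. \<exists>r<4. k = block_mode n i r"
proof (cases "k < 2 * n")
  case True
  then show ?thesis
    by (intro exI[of _ "k div 2"] conjI exI[of _ "k mod 2"]) (auto simp: block_mode_def)
next
  case False
  assume "k < 4 * n"
  with False show ?thesis
    by (intro exI[of _ "(k - 2 * n) div 2"] conjI exI[of _ "2 + (k - 2 * n) mod 2"]) (auto simp: block_mode_def)
qed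

lemma product_state_cong:
  assumes "\<And>i. i < n \<Longrightarrow> F i = G i"
  shows "product_state n F = product_state n G"
proof -
  have "(\<Prod>i<n. F i (block_occ n i N)) = (\<Prod>i<n. G i (block_occ n i N))" for N
    by (rule prod.cong) (simp_all add: assms)
  then show ?thesis unfolding product_state_def by (simp only:)
qed

lemma product_state_fun_upd_block:
  assumes i: "i < n" and rs: "r < 4" "s < 4" "r \<noteq> s"
  shows "product_state n G (N(block_mode n i r := a, block_mode n i s := b))
    = (if \<forall>k\<ge>4 * n. N k = 0
       then G i ((block_occ n i N)(r := a, s := b)) * (\<Prod>j\<in>{..<n} - {i}. G j (block_occ n j N))
       else 0)"
proof -
  let ?N = "N(block_mode n i r := a, block_mode n i s := b)"
  have same: "block_mode n i t = block_mode n i t' \<longleftrightarrow> t = t'" if "t < 4" "t' < 4" for t t'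
    using block_mode_inj[OF i i that] by blast
  have apart: "block_mode n j t \<noteq> block_mode n i t'" if "j < n" "j \<noteq> i" "t < 4" "t' < 4" for j t t'
    using block_mode_inj[OF that(1) i that(3,4)] that(2) by blast
  have local: "block_occ n i ?N = (block_occ n i N)(r := a, s := b)"
    using rs by (auto simp: block_occ_def fun_eq_iff same)
  have "block_occ n j ?N = block_occ n j N" if "j < n" "j \<noteq> i" for j
    using rs by (auto simp: block_occ_def fun_eq_iff apart[OF that])
  then have others: "(\<Prod>j\<in>{..<n} - {i}. G j (block_occ n j ?N)) = (\<Prod>j\<in>{..<n} - {i}. G j (block_occ n j N))"
    by (intro prod.cong) auto
  have "?N k = N k" if "4 * n \<le> k" for k
    using that block_mode_less[OF i rs(1)] block_mode_less[OF i rs(2)] by simp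
  then have supp: "(\<forall>k\<ge>4 * n. ?N k = 0) \<longleftrightarrow> (\<forall>k\<ge>4 * n. N k = 0)"
    by simp
  have "(\<Prod>j<n. G j (block_occ n j ?N)) = G i (block_occ n i ?N) * (\<Prod>j\<in>{..<n} - {i}. G j (block_occ n j ?N))"
    using i by (simp add: prod.remove)
  then show ?thesis
    unfolding product_state_def supp local others by (simp only:)
qed

lemma hadamard_product_state:
  assumes i: "i < n" and rs: "r < 4" "s < 4" "r \<noteq> s"
  shows "hadamard (block_mode n i r) (block_mode n i s) (product_state n F)
    = product_state n (F(i := hadamard r s (F i)))"
proof
  fix N :: occ
  let ?p = "block_mode n i r" and ?q = "block_mode n i s"
  let ?B = "block_occ n i N" and ?supp = "\<forall>k\<ge>4 * n. N k = 0"
  define R where "R G = (\<Prod>j\<in>{..<n} - {i}. G j (block_occ n j N))" for G :: "nat \<Rightarrow> state"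
  have upd: "product_state n G (N(?p := a, ?q := b)) = (if ?supp then G i (?B(r := a, s := b)) * R G else 0)"
    for G a b
    unfolding R_def by (rule product_state_fun_upd_block[OF assms])
  have B: "?B r = N ?p" "?B s = N ?q"
    using rs by (simp_all add: block_occ_def)
  have R: "R (F(i := H)) = R F" for H
    unfolding R_def by (rule prod.cong) auto
  show "hadamard ?p ?q (product_state n F) N = product_state n (F(i := hadamard r s (F i))) N"
  proof (cases ?supp)
    case False
    then have "product_state n G (N(?p := a, ?q := b)) = 0" for G a b
      unfolding upd by (simp only: if_False)
    from this[of _ "N ?p" "N ?q"] this show ?thesis
      by (simp add: hadamard_def)
  next
    case True
    then have "hadamard ?p ?q (product_state n F) N = hadamard r s (F i) ?B * R F"
      unfolding hadamard_def upd B by (simp add: sum_distrib_left mult_ac)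
    also have "\<dots> = product_state n (F(i := hadamard r s (F i))) (N(?p := N ?p, ?q := N ?q))"
      unfolding upd R using True B[symmetric] by simp
    finally show ?thesis by simp
  qed
qed

definition block_input :: state where
  "block_input u = of_bool (u 0 = 1 \<and> u 1 = 1 \<and> u 2 = 0 \<and> u 3 = 0)"

definition block_state :: state where
  "block_state = hadamard 1 3 (hadamard 0 2 (hadamard 0 1 block_input))"

lemma hadamard_0_1_block_input:
  "hadamard 0 1 block_input u = (if u 0 + u 1 = 2 \<and> u 2 = 0 \<and> u 3 = 0 then bs_coeff 1 1 (u 0) else 0)"
proof -
  have "hadamard 0 1 block_input u = (\<Sum>a\<le>u 0 + u 1. if a = 1
      then (if u 0 + u 1 = 2 \<and> u 2 = 0 \<and> u 3 = 0 then bs_coeff 1 1 (u 0) else 0) else 0)"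
    unfolding hadamard_def by (rule sum.cong) (auto simp: block_input_def)
  then show ?thesis by auto
qed

lemma block_state_eq: "block_state u = (if u 0 + u 1 + u 2 + u 3 = 2
    then bs_coeff 1 1 (u 0 + u 2) * of_nat ((u 0 + u 2) choose u 0) * of_nat ((u 1 + u 3) choose u 1) / 2 else 0)"
proof -
  let ?\<psi>1 = "hadamard 0 1 block_input" and ?\<psi>2 = "hadamard 0 2 (hadamard 0 1 block_input)"
  have \<psi>2: "?\<psi>2 M = ?\<psi>1 (M(0 := M 0 + M 2, 2 := 0)) * bs_coeff (M 0 + M 2) 0 (M 0)" for M
    by (rule hadamard_vacuum_input) (simp add: hadamard_0_1_block_input del: One_nat_def)
  have "block_state u = ?\<psi>2 (u(1 := u 1 + u 3, 3 := 0)) * bs_coeff (u 1 + u 3) 0 (u 1)"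
    unfolding block_state_def by (rule hadamard_vacuum_input) (simp add: \<psi>2 hadamard_0_1_block_input del: One_nat_def)
  also have "\<dots> = (if u 0 + u 1 + u 2 + u 3 = 2 then bs_coeff 1 1 (u 0 + u 2) else 0)
      * (of_nat ((u 0 + u 2) choose u 0) * of_nat ((u 1 + u 3) choose u 1)
         / complex_of_real (sqrt 2) ^ (u 0 + u 1 + u 2 + u 3))"
    by (simp add: \<psi>2 hadamard_0_1_block_input bs_coeff_vacuum_right power_add algebra_simps del: One_nat_def)
  finally show ?thesis by (simp add: power2_eq_square sqrt2_times_sqrt2)
qed

lemma block_state_ancillas_1_1: "u 2 = 1 \<Longrightarrow> u 3 = 1 \<Longrightarrow> block_state u = 0"
  by (auto simp: block_state_eq bs_coeff_1_1 choose_one simp del: One_nat_def)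

lemma block_state_ancillas_1_0: "u 2 = 1 \<Longrightarrow> u 3 = 0 \<Longrightarrow> block_state u = of_bool (u 0 = 1 \<and> u 1 = 0) * (1 / 2)"
proof -
  assume "u 2 = 1" "u 3 = 0"
  moreover have "u 0 + u 1 + 1 = 2 \<longleftrightarrow> (u 0 = 1 \<and> u 1 = 0) \<or> (u 0 = 0 \<and> u 1 = 1)" by arith
  ultimately show ?thesis by (auto simp: block_state_eq bs_coeff_1_1 choose_one simp del: One_nat_def)
qed

lemma block_state_ancillas_0_1: "u 2 = 0 \<Longrightarrow> u 3 = 1 \<Longrightarrow> block_state u = of_bool (u 0 = 0 \<and> u 1 = 1) * (- 1 / 2)"
proof -
  assume "u 2 = 0" "u 3 = 1"
  moreover have "u 0 + u 1 + 1 = 2 \<longleftrightarrow> (u 0 = 1 \<and> u 1 = 0) \<or> (u 0 = 0 \<and> u 1 = 1)" by arith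
  ultimately show ?thesis by (auto simp: block_state_eq bs_coeff_1_1 choose_one simp del: One_nat_def)
qed

section \<open>The state before the analyzer\<close>

lemma block_input_block_occ:
  "block_input (block_occ n i N) = of_bool (\<forall>r<4. N (block_mode n i r) = of_bool (r < 2))"
  by (auto simp: block_input_def block_occ_def numeral_eq_Suc less_Suc_eq)

lemma input_occ_iff_blocks:
  "N = (\<lambda>k. if k < 2 * n then 1 else 0)
    \<longleftrightarrow> (\<forall>k\<ge>4 * n. N k = 0) \<and> (\<forall>i<n. \<forall>r<4. N (block_mode n i r) = of_bool (r < 2))"
  (is "N = ?full \<longleftrightarrow> ?supp \<and> ?blocks")
proof
  have full: "?full (block_mode n i r) = of_bool (r < 2)" if "i < n" for i r
    using that by (auto simp: block_mode_def)
  show "N = ?full \<Longrightarrow> ?supp \<and> ?blocks"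
    using full by simp
  assume N: "?supp \<and> ?blocks"
  show "N = ?full"
  proof
    fix k
    show "N k = ?full k"
    proof (cases "k < 4 * n")
      case True
      then obtain i r where "i < n" "r < 4" "k = block_mode n i r"
        using block_mode_surj by blast
      then show ?thesis using N full by simp
    next
      case False
      then show ?thesis using N by simp
    qed
  qed
qed

lemma ghz_input_eq: "ghz_input n = product_state n (\<lambda>_. block_input)"
proof
  fix N :: occ
  have "(\<Prod>i<n. block_input (block_occ n i N))
      = (of_bool (\<forall>i<n. \<forall>r<4. N (block_mode n i r) = of_bool (r < 2)) :: complex)"
    unfolding block_input_block_occ using prod_of_bool_times[of "{..<n}" _ "\<lambda>_. 1 :: complex"] by auto
  then show "ghz_input n N = product_state n (\<lambda>_. block_input) N"
    unfolding ghz_input_def product_state_def input_occ_iff_blocks by simp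
qed

fun block_gate :: "nat \<Rightarrow> nat \<times> nat \<times> nat \<Rightarrow> nat \<times> nat" where
  "block_gate n (i, r, s) = (block_mode n i r, block_mode n i s)"

lemma hadamards_product_state:
  assumes "\<forall>(i, r, s) \<in> set gs. i < n \<and> r < 4 \<and> s < 4 \<and> r \<noteq> s"
  shows "hadamards (map (block_gate n) gs) (product_state n F)
    = product_state n (\<lambda>i. hadamards (map snd (filter (\<lambda>g. fst g = i) gs)) (F i))"
  using assms
proof (induction gs rule: rev_induct)
  case Nil
  then show ?case by simp
next
  case (snoc g gs)
  obtain i r s where g: "g = (i, r, s)" by (cases g)
  let ?G = "\<lambda>j. hadamards (map snd (filter (\<lambda>g. fst g = j) gs)) (F j)"
  have "hadamards (map (block_gate n) (gs @ [g])) (product_state n F)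
      = hadamard (block_mode n i r) (block_mode n i s) (product_state n ?G)"
    using snoc by (simp add: g)
  also have "\<dots> = product_state n (?G(i := hadamard r s (?G i)))"
    using snoc.prems g by (intro hadamard_product_state) auto
  also have "?G(i := hadamard r s (?G i)) = (\<lambda>j. hadamards (map snd (filter (\<lambda>g. fst g = j) (gs @ [g]))) (F j))"
    by (auto simp: g fun_eq_iff)
  finally show ?case .
qed

definition on_every_block :: "nat \<Rightarrow> (nat \<times> nat) list \<Rightarrow> (nat \<times> nat \<times> nat) list" where
  "on_every_block n gs = concat (map (\<lambda>i. map (Pair i) gs) [0..<n])"

lemma filter_on_every_block: "i < n \<Longrightarrow> map snd (filter (\<lambda>g. fst g = i) (on_every_block n gs)) = gs"
proof (induction n)
  case 0
  then show ?case by simp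
next
  case (Suc n)
  have "filter (\<lambda>g. fst g = n) (on_every_block n gs) = []"
    by (auto simp: on_every_block_def filter_empty_conv)
  then show ?case
    using Suc by (auto simp: on_every_block_def filter_map o_def less_Suc_eq)
qed

lemma hadamards_on_every_block:
  assumes "\<forall>(r, s) \<in> set gs. r < 4 \<and> s < 4 \<and> r \<noteq> s"
  shows "hadamards (map (block_gate n) (on_every_block n gs)) (product_state n F)
    = product_state n (\<lambda>i. hadamards gs (F i))"
proof -
  have "\<forall>(i, r, s) \<in> set (on_every_block n gs). i < n \<and> r < 4 \<and> s < 4 \<and> r \<noteq> s"
    using assms by (auto simp: on_every_block_def)
  then show ?thesis
    by (simp add: hadamards_product_state filter_on_every_block cong: product_state_cong)
qed

lemma step2_pairs_eq: "step2_pairs n = map (block_gate n) (on_every_block n [(0, 1)])"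
  by (simp add: step2_pairs_def on_every_block_def block_mode_def map_concat)

lemma step3_pairs_eq: "step3_pairs n = map (block_gate n) (on_every_block n [(0, 2), (1, 3)])"
proof -
  have "map (\<lambda>j. (j, 2 * n + j)) [0..<2 * k] = map (block_gate n) (on_every_block k [(0, 2), (1, 3)])" for k
    by (induction k) (auto simp: on_every_block_def block_mode_def)
  then show ?thesis by (simp add: step3_pairs_def)
qed

lemma pre_analyzer_state:
  "hadamards (step3_pairs n) (hadamards (step2_pairs n) (ghz_input n)) = product_state n (\<lambda>_. block_state)"
  by (simp add: step2_pairs_eq step3_pairs_eq ghz_input_eq hadamards_on_every_block block_state_def)

definition analyzer_left :: "nat \<Rightarrow> nat \<Rightarrow> nat" where
  "analyzer_left n j = 2 * n + (2 * j + 1)"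

definition analyzer_right :: "nat \<Rightarrow> nat \<Rightarrow> nat" where
  "analyzer_right n j = 2 * n + (2 * j + 2) mod (2 * n)"

definition cyclic_pred :: "nat \<Rightarrow> nat \<Rightarrow> nat" where
  "cyclic_pred n i = (if i = 0 then n - 1 else i - 1)"

lemma cyclic_pred_less: "i < n \<Longrightarrow> cyclic_pred n i < n"
  by (auto simp: cyclic_pred_def)

lemma cyclic_pred_succ_mod:
  assumes "i < n"
  shows "(2 * cyclic_pred n i + 2) mod (2 * n) = 2 * i"
proof (cases "i = 0")
  case True
  with assms have "2 * cyclic_pred n i + 2 = 2 * n" by (simp add: cyclic_pred_def)
  with True show ?thesis by simp
next
  case False
  with assms have "2 * cyclic_pred n i + 2 = 2 * i" by (simp add: cyclic_pred_def)
  with assms show ?thesis by simp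
qed

lemma analyzer_pairs_eq: "analyzer_pairs n = map (\<lambda>j. (analyzer_left n j, analyzer_right n j)) [0..<n]"
  by (simp add: analyzer_pairs_def analyzer_left_def analyzer_right_def)

lemma analyzer_left_block: "analyzer_left n i = block_mode n i 3"
  by (simp add: analyzer_left_def block_mode_def)

lemma analyzer_right_block:
  assumes "i < n"
  shows "analyzer_right n (cyclic_pred n i) = block_mode n i 2"
  unfolding analyzer_right_def block_mode_def cyclic_pred_succ_mod[OF assms] by simp

lemma analyzer_modes_bounds:
  assumes "j < n"
  shows "2 * n \<le> analyzer_left n j" "analyzer_left n j < 4 * n"
    "2 * n \<le> analyzer_right n j" "analyzer_right n j < 4 * n"
  using assms by (auto simp: analyzer_left_def analyzer_right_def)

lemma disjoint_analyzer_pairs: "disjoint_pairs (analyzer_left n) (analyzer_right n) n"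
  unfolding disjoint_pairs_def
proof (intro allI impI conjI)
  have right: "analyzer_right n j = 2 * n + 2 * (Suc j mod n)" for j
    by (simp add: analyzer_right_def mult_mod_right)
  fix i j assume ij: "i < n" "j < n"
  have "2 * a + 1 \<noteq> 2 * b" for a b :: nat
    by presburger
  then have "2 * i + 1 \<noteq> 2 * (Suc j mod n)" .
  then show "analyzer_left n i \<noteq> analyzer_right n j"
    unfolding right analyzer_left_def by linarith
  assume "i \<noteq> j"
  then show "analyzer_left n i \<noteq> analyzer_left n j"
    by (simp add: analyzer_left_def)
  have "Suc i mod n \<noteq> Suc j mod n"
    using ij \<open>i \<noteq> j\<close> by (auto simp: mod_Suc split: if_splits)
  then show "analyzer_right n i \<noteq> analyzer_right n j"
    unfolding right by simp
qed

lemma analyzer_success_le_1: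
  assumes "analyzer_success n m" "k < 2 * n"
  shows "m k \<le> 1"
proof (cases "even k")
  case True
  then obtain i where i: "k = 2 * i" "i < n" using assms(2) by auto
  then show ?thesis
    using assms(1) cyclic_pred_less[OF i(2)] cyclic_pred_succ_mod[OF i(2)]
    unfolding analyzer_success_def by (metis le_add2)
next
  case False
  then obtain i where i: "k = 2 * i + 1" "i < n" using assms(2) by (auto elim: oddE)
  then show ?thesis
    using assms(1) unfolding analyzer_success_def by (metis le_add1)
qed

lemma join_occ_analyzer:
  assumes "j < n"
  shows "join_occ n v m (analyzer_left n j) = m (2 * j + 1)"
    "join_occ n v m (analyzer_right n j) = m ((2 * j + 2) mod (2 * n))"
  using assms by (simp_all add: join_occ_def analyzer_left_def analyzer_right_def)

abbreviation analyzer_fill :: "nat \<Rightarrow> nat set \<Rightarrow> occ \<Rightarrow> occ" where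
  "analyzer_fill n \<equiv> fill_pairs (analyzer_left n) (analyzer_right n) n"

lemma block_occ_fill_analyzer:
  fixes T :: "nat set" and N :: occ
  assumes "i < n"
  defines "F \<equiv> analyzer_fill n T N"
  shows "block_occ n i F 0 = N (2 * i)" "block_occ n i F 1 = N (2 * i + 1)"
    "block_occ n i F 2 = of_bool (cyclic_pred n i \<notin> T)" "block_occ n i F 3 = of_bool (i \<in> T)"
proof -
  have "F k = N k" if "k < 2 * n" for k
    unfolding F_def using that analyzer_modes_bounds by (intro fill_pairs_outside) (metis not_le)
  then show "block_occ n i F 0 = N (2 * i)" "block_occ n i F 1 = N (2 * i + 1)"
    using assms(1) by (simp_all add: block_occ_def block_mode_def)
  have "F (analyzer_left n i) = of_bool (i \<in> T)"
    "F (analyzer_right n (cyclic_pred n i)) = of_bool (cyclic_pred n i \<notin> T)"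
    unfolding F_def using fill_pairs_at_pair[OF disjoint_analyzer_pairs] cyclic_pred_less assms(1) by auto
  then show "block_occ n i F 2 = of_bool (cyclic_pred n i \<notin> T)" "block_occ n i F 3 = of_bool (i \<in> T)"
    by (simp_all add: block_occ_def analyzer_left_block analyzer_right_block[OF assms(1)])
qed

lemma pre_measurement_expansion:
  assumes "analyzer_success n m"
  shows "pre_measurement n (join_occ n v m) = (\<Sum>T\<in>Pow {..<n}.
    (\<Prod>j<n. bs_coeff (of_bool (j \<in> T)) (of_bool (j \<notin> T)) (m (2 * j + 1)))
    * (\<Prod>i<n. block_state (block_occ n i (analyzer_fill n T (join_occ n v m)))))"
proof -
  let ?N = "join_occ n v m"
  have "\<forall>j<n. ?N (analyzer_left n j) + ?N (analyzer_right n j) = 1"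
    using assms by (simp add: join_occ_analyzer analyzer_success_def)
  then have "pre_measurement n ?N = (\<Sum>T\<in>Pow {..<n}.
      (\<Prod>j<n. bs_coeff (of_bool (j \<in> T)) (of_bool (j \<notin> T)) (?N (analyzer_left n j)))
      * product_state n (\<lambda>_. block_state) (analyzer_fill n T ?N))"
    unfolding pre_measurement_def pre_analyzer_state analyzer_pairs_eq
    by (rule hadamards_single_photon_pairs[OF disjoint_analyzer_pairs])
  moreover have "analyzer_fill n T ?N k = 0" if "4 * n \<le> k" for T k
    using that analyzer_modes_bounds
    by (subst fill_pairs_outside) (auto simp: join_occ_def dest: leD)
  ultimately show ?thesis
    by (simp add: product_state_def join_occ_analyzer)
qed

section \<open>The heralded state\<close>

lemma cyclic_pred_closed_eq_all:
  assumes "T \<subseteq> {..<n}" "\<forall>i\<in>T. cyclic_pred n i \<in> T" "T \<noteq> {}"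
  shows "T = {..<n}"
proof -
  have down: "j \<in> T" if "k \<in> T" "j \<le> k" for j k
    using that
  proof (induction k)
    case (Suc k)
    then have "k \<in> T" using assms(2) by (force simp: cyclic_pred_def)
    with Suc show ?case by (auto simp: le_Suc_eq)
  qed simp
  obtain k where "k \<in> T" using assms(3) by blast
  then have "0 \<in> T" using down by blast
  then have "n - 1 \<in> T" using assms(2) by (force simp: cyclic_pred_def)
  then show ?thesis using assms(1) down by fastforce
qed

lemma prod_block_state_analyzer_fill_vanish:
  assumes "T \<subseteq> {..<n}" "T \<noteq> {}" "T \<noteq> {..<n}"
  shows "(\<Prod>i<n. block_state (block_occ n i (analyzer_fill n T N))) = 0"
proof -
  obtain i where i: "i \<in> T" "cyclic_pred n i \<notin> T"
    using assms cyclic_pred_closed_eq_all by blast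
  with assms(1) have "i < n" by auto
  with i show ?thesis
    by (intro prod_zero) (auto intro!: bexI[of _ i] block_state_ancillas_1_1 simp: block_occ_fill_analyzer)
qed

lemma prod_block_state_analyzer_fill_empty:
  "(\<Prod>i<n. block_state (block_occ n i (analyzer_fill n {} N)))
    = of_bool (\<forall>i<n. N (2 * i) = 1 \<and> N (2 * i + 1) = 0) * (1 / 2) ^ n"
proof -
  have "(\<Prod>i<n. block_state (block_occ n i (analyzer_fill n {} N)))
      = (\<Prod>i<n. of_bool (N (2 * i) = 1 \<and> N (2 * i + 1) = 0) * (1 / 2))"
    by (rule prod.cong) (simp_all add: block_state_ancillas_1_0 block_occ_fill_analyzer del: One_nat_def)
  then show ?thesis by (auto simp: prod_of_bool_times)
qed

lemma prod_block_state_analyzer_fill_full: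
  "(\<Prod>i<n. block_state (block_occ n i (analyzer_fill n {..<n} N)))
    = of_bool (\<forall>i<n. N (2 * i) = 0 \<and> N (2 * i + 1) = 1) * (- 1 / 2) ^ n"
proof -
  have "(\<Prod>i<n. block_state (block_occ n i (analyzer_fill n {..<n} N)))
      = (\<Prod>i<n. of_bool (N (2 * i) = 0 \<and> N (2 * i + 1) = 1) * (- 1 / 2))"
    by (rule prod.cong)
      (simp_all add: block_state_ancillas_0_1 block_occ_fill_analyzer cyclic_pred_less del: One_nat_def)
  then show ?thesis by (auto simp: prod_of_bool_times)
qed

definition even_occ :: "nat \<Rightarrow> occ" where
  "even_occ n = (\<lambda>k :: nat. if k < 2 * n \<and> even k then 1 else 0)"

definition odd_occ :: "nat \<Rightarrow> occ" where
  "odd_occ n = (\<lambda>k :: nat. if k < 2 * n \<and> odd k then 1 else 0)"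

lemma B_plus_eq: "B_plus n v = (of_bool (v = even_occ n) + of_bool (v = odd_occ n)) / complex_of_real (sqrt 2)"
  by (simp add: B_plus_def even_occ_def odd_occ_def add_divide_distrib)

lemma occ_eq_by_pairs:
  fixes v w :: occ
  assumes "\<forall>k\<ge>2 * n. v k = 0" "\<forall>k\<ge>2 * n. w k = 0" "\<forall>i<n. v (2 * i) = w (2 * i) \<and> v (2 * i + 1) = w (2 * i + 1)"
  shows "v = w"
proof
  fix k :: nat
  show "v k = w k"
  proof (cases "k < 2 * n")
    case True
    then show ?thesis using assms(3) by (cases "even k") (auto elim!: evenE oddE)
  next
    case False
    then show ?thesis using assms(1,2) by simp
  qed
qed

lemma eq_even_occ_iff:
  "\<forall>k\<ge>2 * n. v k = 0 \<Longrightarrow> v = even_occ n \<longleftrightarrow> (\<forall>i<n. v (2 * i) = 1 \<and> v (2 * i + 1) = 0)"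
  using occ_eq_by_pairs[of n v "even_occ n"] by (auto simp: even_occ_def)

lemma eq_odd_occ_iff:
  "\<forall>k\<ge>2 * n. v k = 0 \<Longrightarrow> v = odd_occ n \<longleftrightarrow> (\<forall>i<n. v (2 * i) = 0 \<and> v (2 * i + 1) = 1)"
  using occ_eq_by_pairs[of n v "odd_occ n"] by (auto simp: odd_occ_def)

lemma pre_measurement_join_occ:
  assumes n: "0 < n" and success: "analyzer_success n m" and v: "\<forall>k\<ge>2 * n. v k = 0"
  shows "pre_measurement n (join_occ n v m) = (- 1 / (2 * complex_of_real (sqrt 2))) ^ n
    * ((- 1) ^ s_odd n m * of_bool (v = even_occ n) + of_bool (v = odd_occ n))"
proof -
  let ?r = "complex_of_real (sqrt 2)" and ?N = "join_occ n v m"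
  define W where "W T = (\<Prod>j<n. bs_coeff (of_bool (j \<in> T)) (of_bool (j \<notin> T)) (m (2 * j + 1)))" for T
  define P where "P T = (\<Prod>i<n. block_state (block_occ n i (analyzer_fill n T ?N)))" for T
  have join: "?N k = v k" if "k < 2 * n" for k
    using that by (simp add: join_occ_def)
  have m_le_1: "\<forall>j\<in>{..<n}. m (2 * j + 1) \<le> 1"
    using analyzer_success_le_1[OF success] by simp
  have "W {} = (- 1) ^ (n + s_odd n m) / ?r ^ n"
    using prod_bs_coeff_0_1[OF m_le_1] by (simp add: W_def s_odd_def del: One_nat_def)
  moreover have "W {..<n} = 1 / ?r ^ n"
    using prod_bs_coeff_1_0[OF m_le_1] by (simp add: W_def del: One_nat_def)
  moreover have "P {} = of_bool (v = even_occ n) * (1 / 2) ^ n"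
    by (simp add: P_def prod_block_state_analyzer_fill_empty join eq_even_occ_iff[OF v] cong: conj_cong)
  moreover have "P {..<n} = of_bool (v = odd_occ n) * (- 1 / 2) ^ n"
    by (simp add: P_def prod_block_state_analyzer_fill_full join eq_odd_occ_iff[OF v] cong: conj_cong)
  moreover have "pre_measurement n ?N = W {} * P {} + W {..<n} * P {..<n}"
  proof -
    have "pre_measurement n ?N = (\<Sum>T\<in>Pow {..<n}. W T * P T)"
      unfolding W_def P_def using success by (rule pre_measurement_expansion)
    also have "\<dots> = (\<Sum>T\<in>{{}, {..<n}}. W T * P T)"
      by (intro sum.mono_neutral_right) (auto simp: P_def prod_block_state_analyzer_fill_vanish)
    also have "\<dots> = W {} * P {} + W {..<n} * P {..<n}"
      using n by (subst sum.insert) auto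
    finally show ?thesis .
  qed
  moreover have "(- 1 / (2 * ?r)) ^ n = (- 1) ^ n * (1 / 2) ^ n * (1 / ?r) ^ n"
    by (simp flip: power_mult_distrib)
  moreover have "(- 1 / 2 :: complex) ^ n = (- 1) ^ n * (1 / 2) ^ n"
    by (simp flip: power_mult_distrib)
  ultimately show ?thesis
    by (simp add: power_add power_one_over algebra_simps add_divide_distrib)
qed

lemma amp_eq_of_le_1:
  assumes "\<forall>k. N k \<le> 1"
  shows "amp \<psi> N = \<psi> N"
proof -
  have "(\<Prod>k\<in>{k. N k \<noteq> 0}. fact (N k)) = (1 :: nat)"
  proof (rule prod.neutral, rule ballI)
    fix k assume "k \<in> {k. N k \<noteq> 0}"
    moreover have "N k \<le> 1" using assms by simp
    ultimately have "N k = 1" by simp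
    then show "fact (N k) = 1" by simp
  qed
  then show ?thesis by (simp add: amp_def)
qed

lemma amp_phase_flip: "amp (phase_flip r \<psi>) N = (- 1) ^ N r * amp \<psi> N"
  by (simp add: amp_def phase_flip_def)

lemma join_occ_le_1:
  assumes "analyzer_success n m" "\<forall>k. v k \<le> 1"
  shows "join_occ n v m k \<le> 1"
proof (cases "2 * n \<le> k \<and> k < 4 * n")
  case True
  then have "m (k - 2 * n) \<le> 1" by (intro analyzer_success_le_1[OF assms(1)]) linarith
  with True show ?thesis by (simp add: join_occ_def)
next
  case False
  then show ?thesis using assms(2) by (auto simp: join_occ_def)
qed

lemma even_occ_odd_occ_at_1: "0 < n \<Longrightarrow> even_occ n 1 = 0 \<and> odd_occ n 1 = 1"
  by (simp add: even_occ_def odd_occ_def)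

lemma ghz_output_eq:
  assumes n: "0 < n" and success: "analyzer_success n m"
  shows "ghz_output n m v = (- 1) ^ s_odd n m * (- 1 / (2 * complex_of_real (sqrt 2))) ^ n
    * (of_bool (v = even_occ n) + of_bool (v = odd_occ n))"
proof (cases "\<forall>k\<ge>2 * n. v k = 0")
  case False
  then have "v \<noteq> even_occ n" "v \<noteq> odd_occ n"
    by (auto simp: even_occ_def odd_occ_def)
  moreover have "ghz_output n m v = 0"
    unfolding ghz_output_def using False by (simp only: if_False)
  ultimately show ?thesis by simp
next
  case True
  let ?N = "join_occ n v m" and ?\<psi> = "pre_measurement n"
  have pre: "?\<psi> ?N = (- 1 / (2 * complex_of_real (sqrt 2))) ^ n
      * ((- 1) ^ s_odd n m * of_bool (v = even_occ n) + of_bool (v = odd_occ n))"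
    by (rule pre_measurement_join_occ[OF n success True])
  have amp: "amp ?\<psi> ?N = ?\<psi> ?N"
  proof (cases "v = even_occ n \<or> v = odd_occ n")
    case True
    then have "\<forall>k. v k \<le> 1" by (auto simp: even_occ_def odd_occ_def)
    then show ?thesis using join_occ_le_1[OF success] by (simp add: amp_eq_of_le_1)
  next
    case False
    then show ?thesis by (simp add: amp_def pre)
  qed
  have "?N 1 = v 1" using n by (simp add: join_occ_def)
  then have out: "ghz_output n m v = (if odd (s_odd n m) then (- 1) ^ v 1 else 1) * ?\<psi> ?N"
    using True by (simp add: ghz_output_def amp_phase_flip amp)
  have "even_occ n \<noteq> odd_occ n" "even_occ n 1 = 0" "odd_occ n 1 = 1"
    using even_occ_odd_occ_at_1[OF n] by auto
  then consider "v = even_occ n" "v 1 = 0" "v \<noteq> odd_occ n" | "v = odd_occ n" "v 1 = 1" "v \<noteq> even_occ n"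
    | "v \<noteq> even_occ n" "v \<noteq> odd_occ n" by metis
  then show ?thesis
    unfolding out pre by cases simp_all
qed

theorem lemma3:
  fixes n :: nat and m :: "nat \<Rightarrow> nat"
  assumes "n \<ge> 3"
    and "analyzer_success n m"
    and "ghz_output n m \<noteq> (\<lambda>_. 0)"
  shows "\<exists>c::complex. c \<noteq> 0 \<and> (\<forall>v. ghz_output n m v = c * B_plus n v)"
proof -
  have n: "0 < n" using assms(1) by simp
  define K where "K = (- 1) ^ s_odd n m * (- 1 / (2 * complex_of_real (sqrt 2))) ^ n"
  show ?thesis
  proof (intro exI conjI allI)
    show "K * complex_of_real (sqrt 2) \<noteq> 0"
      by (simp add: K_def)
    show "ghz_output n m v = K * complex_of_real (sqrt 2) * B_plus n v" for v
      unfolding ghz_output_eq[OF n assms(2)] B_plus_eq K_def[symmetric] by simp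
  qed
qed

end
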